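(* Let $S_5\subseteq G^5$ be the stabilizer group generated by $g_1=X\otimes Z\otimes Z\otimes X\otimes I$, $g_2=I\otimes X\otimes Z\otimes Z\otimes X$, $g_3=X\otimes I\otimes X\otimes Z\otimes Z$, $g_4=Z\otimes X\otimes I\otimes X\otimes Z$. Each $\epsilon\in\mathbb{F}_2^4$ is the syndrome of exactly one element of $\{I^{\otimes5}\}\cup\{\text{single-qubit }X,Y,Z\text{ errors}\}$ (16 elements); let $\phi(\epsilon)$ be that element. Then, with this $\phi$, $f_{S_5}(0)=f_{S_5}(1)=1$, $f_{S_5}(2)=\tfrac{7}{16}$, and $f_{S_5}(t)=0$ for $t=3,4,5$.
   Context: $X=\begin{pmatrix}0&1\\1&0\end{pmatrix}$, $Y=\begin{pmatrix}0&1\\-1&0\end{pmatrix}$, $Z=\begin{pmatrix}1&0\\0&-1\end{pmatrix}$. For a stabilizer group $S\subseteq G^n$ (abelian subgroup of the $n$-qubit Pauli group not containing $-I$) with independent generators $g_1,\dots,g_r$, the syndrome of a Pauli operator $g$ is $\epsilon(g)\in\mathbb{F}_2^r$, $\epsilon_i(g)=0$ if $g$ commutes with $g_i$ and $1$ if it anticommutes. For $\{m\}\subseteq\{1,\dots,n\}$, $P^{\{m\}}$ is the set of tensor products that are one of $I,X,Y,Z$ on each qubit of $\{m\}$ and $I$ elsewhere. Given an error correcting function $\phi:\mathbb{F}_2^r\to G^n$, call a syndrome $\epsilon\in\Sigma_{\{m\}}:=\{\epsilon(g):g\in P^{\{m\}}\}$ good for $\{m\}$ if $\phi(\epsilon)g\in\{\lambda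 s:s\in S,\lambda\in\{\pm1,\pm i\}\}$ for every $g\in P^{\{m\}}$ with $\epsilon(g)=\epsilon$. Define, for $t=0,\dots,n$, $$f_S(t)=\binom{n}{t}^{-1}\sum_{|\{m\}|=t}\frac{|\{\epsilon\in\Sigma_{\{m\}}:\epsilon\text{ good for }\{m\}\}|}{|\Sigma_{\{m\}}|},$$ the sum over all $t$-element subsets $\{m\}$; this is the probability that a random error affecting $t$ randomly located qubits is corrected. *)

theory Defs
  imports Complex_Main
begin

datatype pauli1 = PI | PX | PY | PZ

text \<open>Concrete 2x2 matrices (rows/columns indexed by bool, False = first basis vector),
  with X = [[0,1],[1,0]], Y = [[0,1],[-1,0]], Z = [[1,0],[0,-1]] as in the paper.\<close>
fun pmat :: "pauli1 \<Rightarrow> bool \<Rightarrow> bool \<Rightarrow> complex" where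
  "pmat PI r c = (if r = c then 1 else 0)"
| "pmat PX r c = (if r = c then 0 else 1)"
| "pmat PY r c = (if r = c then 0 else if r then -1 else 1)"
| "pmat PZ r c = (if r = c then (if r then -1 else 1) else 0)"

definition mat2_mult :: "(bool \<Rightarrow> bool \<Rightarrow> complex) \<Rightarrow> (bool \<Rightarrow> bool \<Rightarrow> complex) \<Rightarrow> bool \<Rightarrow> bool \<Rightarrow> complex" where
  "mat2_mult A B r c = (\<Sum>k\<in>UNIV. A r k * B k c)"

text \<open>Multiplication table of the single-qubit Paulis: a * b = fst (mult1 a b) * snd (mult1 a b).\<close>
fun mult1 :: "pauli1 \<Rightarrow> pauli1 \<Rightarrow> complex \<times> pauli1" where
  "mult1 PI b = (1, b)"
| "mult1 a PI = (1, a)"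
| "mult1 PX PX = (1, PI)"
| "mult1 PY PY = (-1, PI)"
| "mult1 PZ PZ = (1, PI)"
| "mult1 PX PZ = (-1, PY)"
| "mult1 PZ PX = (1, PY)"
| "mult1 PX PY = (-1, PZ)"
| "mult1 PY PX = (1, PZ)"
| "mult1 PZ PY = (1, PX)"
| "mult1 PY PZ = (-1, PX)"

lemma mult1_correct:
  "mat2_mult (pmat a) (pmat b) r c = fst (mult1 a b) * pmat (snd (mult1 a b)) r c"
  by (cases a; cases b; cases r; cases c) (simp_all add: mat2_mult_def UNIV_bool)

text \<open>An element of G^n is a phase lambda times a tensor product of single-qubit Paulis,
  represented as (lambda, [P_0, ..., P_{n-1}]) (qubits indexed from 0).\<close>
type_synonym pauli = "complex \<times> pauli1 list"

definition pmult :: "pauli \<Rightarrow> pauli \<Rightarrow> pauli" where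
  "pmult g h = (fst g * fst h * prod_list (map (\<lambda>(a,b). fst (mult1 a b)) (zip (snd g) (snd h))),
                map (\<lambda>(a,b). snd (mult1 a b)) (zip (snd g) (snd h)))"

definition pid :: "nat \<Rightarrow> pauli" where
  "pid n = (1, replicate n PI)"

text \<open>Stabilizer group generated by the list of generators (generated submonoid; G^n is finite,
  so this is the generated subgroup).\<close>
inductive_set stab_group :: "nat \<Rightarrow> pauli list \<Rightarrow> pauli set" for n gens where
  stab_id: "pid n \<in> stab_group n gens"
| stab_mult: "s \<in> stab_group n gens \<Longrightarrow> h \<in> set gens \<Longrightarrow> pmult h s \<in> stab_group n gens"

definition phases :: "complex set" where
  "phases = {1, -1, \<i>, -\<i>}"

definition up_to_phase :: "pauli set \<Rightarrow> pauli set" where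
  "up_to_phase S = {(l * fst s, snd s) | l s. l \<in> phases \<and> s \<in> S}"

text \<open>Syndrome: i-th entry True (=1) iff g anticommutes (does not commute) with g_i.\<close>
definition syndrome :: "pauli list \<Rightarrow> pauli \<Rightarrow> bool list" where
  "syndrome gens g = map (\<lambda>h. pmult g h \<noteq> pmult h g) gens"

definition Pset :: "nat \<Rightarrow> nat set \<Rightarrow> pauli set" where
  "Pset n M = {(1, ops) | ops. length ops = n \<and> (\<forall>i<n. i \<notin> M \<longrightarrow> ops ! i = PI)}"

definition Sigma_set :: "nat \<Rightarrow> pauli list \<Rightarrow> nat set \<Rightarrow> bool list set" where
  "Sigma_set n gens M = syndrome gens ` Pset n M"

definition good :: "nat \<Rightarrow> pauli list \<Rightarrow> (bool list \<Rightarrow> pauli) \<Rightarrow> nat set \<Rightarrow> bool list \<Rightarrow> bool" where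
  "good n gens phi M e \<longleftrightarrow> (\<forall>g\<in>Pset n M. syndrome gens g = e \<longrightarrow>
      pmult (phi e) g \<in> up_to_phase (stab_group n gens))"

definition fS :: "nat \<Rightarrow> pauli list \<Rightarrow> (bool list \<Rightarrow> pauli) \<Rightarrow> nat \<Rightarrow> real" where
  "fS n gens phi t = (\<Sum>M\<in>{M. M \<subseteq> {..<n} \<and> card M = t}.
      real (card {e \<in> Sigma_set n gens M. good n gens phi M e}) / real (card (Sigma_set n gens M)))
    / real (n choose t)"

definition gens5 :: "pauli list" where
  "gens5 = [(1, [PX, PZ, PZ, PX, PI]),
            (1, [PI, PX, PZ, PZ, PX]),
            (1, [PX, PI, PX, PZ, PZ]),
            (1, [PZ, PX, PI, PX, PZ])]"

definition E5 :: "pauli set" where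
  "E5 = {pid 5} \<union> {(1, (replicate 5 PI)[i := p]) | i p. i < 5 \<and> p \<in> {PX, PY, PZ}}"

definition phi5 :: "bool list \<Rightarrow> pauli" where
  "phi5 e = (THE x. x \<in> E5 \<and> syndrome gens5 x = e)"

end

theory Submission
  imports Defs
begin

text \<open>
  The stabilizer group of the five-qubit code consists of the 16 products of subsets of the
  generators, all with phase 1 or -1, so a correction succeeds iff the tensor part of
  \<open>\<phi>(\<epsilon>) g\<close> is that of a stabilizer. The 16 errors of weight at most one
  have pairwise distinct syndromes, which therefore exhaust all 16 syndromes; this makes the
  decoder well defined. For a set of at most two qubits the ratio of good syndromes is obtained
  by enumerating the (at most 16) Pauli errors supported there, grouped by syndrome: every
  syndrome is good for one qubit, and for two qubits only the 7 syndromes of the errors of weight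
  at most one survive. On three qubits every syndrome is the syndrome of some uncorrected error;
  since a syndrome that is good for \<open>M\<close> is good for every subset of \<open>M\<close>, no
  syndrome is good on four or five qubits either.
\<close>

lemma phases_mult: "a \<in> phases \<Longrightarrow> b \<in> phases \<Longrightarrow> a * b \<in> phases"
  unfolding phases_def by auto

lemma phases_divide: "a \<in> phases \<Longrightarrow> b \<in> phases \<Longrightarrow> a / b \<in> phases"
  unfolding phases_def by (auto simp: field_simps)

lemma mem_up_to_phase_iff:
  assumes "\<And>s. s \<in> S \<Longrightarrow> fst s \<in> phases" and "fst x \<in> phases"
  shows "x \<in> up_to_phase S \<longleftrightarrow> snd x \<in> snd ` S"
proof
  assume "x \<in> up_to_phase S"
  then show "snd x \<in> snd ` S" unfolding up_to_phase_def by force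
next
  assume "snd x \<in> snd ` S"
  then obtain s where s: "s \<in> S" "snd s = snd x" by force
  have "fst s \<noteq> 0" using assms(1)[OF s(1)] unfolding phases_def by auto
  then have "x = (fst x / fst s * fst s, snd s)" using s(2) by (simp add: prod_eq_iff)
  moreover have "fst x / fst s \<in> phases" using assms s(1) by (simp add: phases_divide)
  ultimately show "x \<in> up_to_phase S" unfolding up_to_phase_def using s(1) by blast
qed

lemma fst_mult1_in_phases: "fst (mult1 a b) \<in> phases"
  by (cases a; cases b) (simp_all add: phases_def)

lemma fst_pmult_in_phases:
  assumes "fst g \<in> phases" "fst h \<in> phases"
  shows "fst (pmult g h) \<in> phases"
proof -
  have "prod_list xs \<in> phases" if "set xs \<subseteq> phases" for xs
    using that by (induction xs) (auto simp: phases_def)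
  moreover have "set (map (\<lambda>(a, b). fst (mult1 a b)) ps) \<subseteq> phases" for ps
    using fst_mult1_in_phases by auto
  ultimately have "prod_list (map (\<lambda>(a, b). fst (mult1 a b)) ps) \<in> phases" for ps
    by blast
  then show ?thesis using assms unfolding pmult_def by (simp add: phases_mult)
qed

lemma stab_group_phases:
  assumes "\<forall>h\<in>set gens. fst h \<in> phases"
  shows "s \<in> stab_group n gens \<Longrightarrow> fst s \<in> phases"
proof (induction rule: stab_group.induct)
  case stab_id
  show ?case by (simp add: pid_def phases_def)
next
  case (stab_mult s h)
  then show ?case using assms by (simp add: fst_pmult_in_phases)
qed

lemma stab_group_subset_if_closed:
  assumes "pid n \<in> set L" "\<forall>h\<in>set gens. \<forall>s\<in>set L. pmult h s \<in> set L"
  shows "stab_group n gens \<subseteq> set L"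
proof
  show "s \<in> set L" if "s \<in> stab_group n gens" for s
    using that by (induction rule: stab_group.induct) (use assms in blast)+
qed

lemma foldr_pmult_in_stab_group:
  "set hs \<subseteq> set gens \<Longrightarrow> foldr pmult hs (pid n) \<in> stab_group n gens"
  by (induction hs) (auto intro: stab_group.intros)

lemma subseq_products_in_stab_group:
  "set (map (\<lambda>hs. foldr pmult hs (pid n)) (subseqs gens)) \<subseteq> stab_group n gens"
proof
  fix s assume "s \<in> set (map (\<lambda>hs. foldr pmult hs (pid n)) (subseqs gens))"
  then obtain hs where "hs \<in> set (subseqs gens)" "s = foldr pmult hs (pid n)"
    by auto
  moreover from this(1) have "set hs \<in> Pow (set gens)"
    unfolding subseqs_powset[symmetric] by (rule imageI)
  ultimately show "s \<in> stab_group n gens"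
    by (simp add: foldr_pmult_in_stab_group)
qed

lemma good_subset: "T \<subseteq> M \<Longrightarrow> good n gens phi M e \<Longrightarrow> good n gens phi T e"
  unfolding good_def Pset_def by blast

definition pauli_ops_on :: "nat \<Rightarrow> nat set \<Rightarrow> pauli1 list list" where
  "pauli_ops_on n M = product_lists (map (\<lambda>i. if i \<in> M then [PI, PX, PY, PZ] else [PI]) [0..<n])"

lemma Pset_eq_pauli_ops_on: "Pset n M = Pair 1 ` set (pauli_ops_on n M)"
proof -
  have "p \<in> set (if i \<in> M then [PI, PX, PY, PZ] else [PI]) \<longleftrightarrow> (i \<notin> M \<longrightarrow> p = PI)" for p i
    by (cases p) auto
  then show ?thesis
    unfolding Pset_def pauli_ops_on_def product_lists_set by (auto simp: list_all2_conv_all_nth)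
qed

definition success_rate :: "nat \<Rightarrow> pauli list \<Rightarrow> (bool list \<Rightarrow> pauli) \<Rightarrow> nat set \<Rightarrow> real" where
  "success_rate n gens phi M =
     real (card {e \<in> Sigma_set n gens M. good n gens phi M e}) / real (card (Sigma_set n gens M))"

lemma fS_eq_sum_success_rate:
  "fS n gens phi t =
     (\<Sum>M | M \<subseteq> {..<n} \<and> card M = t. success_rate n gens phi M) / real (n choose t)"
  unfolding fS_def success_rate_def ..

lemma fS_eq_const:
  assumes "t \<le> n" and "\<And>M. M \<subseteq> {..<n} \<Longrightarrow> card M = t \<Longrightarrow> success_rate n gens phi M = c"
  shows "fS n gens phi t = c"
proof -
  let ?F = "{M. M \<subseteq> {..<n} \<and> card M = t}"
  have "card ?F = n choose t"
    using n_subsets[of "{..<n}" t] by (simp add: Collect_conj_eq Int_commute Pow_def)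
  then have sum: "(\<Sum>M\<in>?F. success_rate n gens phi M) = real (n choose t) * c"
    using assms(2) by simp
  have "n choose t \<noteq> 0"
    using assms(1) by simp
  then show ?thesis
    unfolding fS_eq_sum_success_rate sum by simp
qed

lemma length_syndrome: "length (syndrome gens g) = length gens"
  by (simp add: syndrome_def)

lemma fS_eq_0_if_no_good:
  assumes "t0 \<le> t"
    and "\<And>T e. T \<subseteq> {..<n} \<Longrightarrow> card T = t0 \<Longrightarrow> length e = length gens
           \<Longrightarrow> \<not> good n gens phi T e"
  shows "fS n gens phi t = 0"
proof -
  have no_good: "{e \<in> Sigma_set n gens M. good n gens phi M e} = {}"
    if "M \<subseteq> {..<n}" "card M = t" for M
  proof -
    have "t0 \<le> card M"
      using assms(1) that(2) by simp
    then obtain T where T: "T \<subseteq> M" "card T = t0"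
      by (rule obtain_subset_with_card_n)
    have "\<not> good n gens phi M e" if "e \<in> Sigma_set n gens M" for e
    proof -
      have "length e = length gens"
        using that length_syndrome unfolding Sigma_set_def by blast
      then show ?thesis
        using assms(2)[of T e] T \<open>M \<subseteq> {..<n}\<close> good_subset by blast
    qed
    then show ?thesis by blast
  qed
  have sum: "(\<Sum>M | M \<subseteq> {..<n} \<and> card M = t. success_rate n gens phi M) = 0"
    by (rule sum.neutral) (simp add: success_rate_def no_good)
  show ?thesis
    unfolding fS_eq_sum_success_rate sum by simp
qed

lemma subset_lessThan_in_subseqs:
  assumes "M \<subseteq> {..<n}" and "P (card M)"
  shows "M \<in> set ` set (filter (\<lambda>xs. P (length xs)) (subseqs [0..<n]))"
proof -
  have "M \<in> set ` set (subseqs [0..<n])"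
    using assms(1) by (simp add: subseqs_powset lessThan_atLeast0)
  then obtain xs where xs: "xs \<in> set (subseqs [0..<n])" "M = set xs"
    by blast
  moreover have "length xs = card M"
    using subseqs_distinctD[OF xs(1)] xs(2) by (simp add: distinct_card)
  ultimately show ?thesis
    using assms(2) by auto
qed

definition corrects ::
    "nat \<Rightarrow> pauli list \<Rightarrow> (bool list \<Rightarrow> pauli) \<Rightarrow> bool list \<Rightarrow> pauli1 list \<Rightarrow> bool" where
  "corrects n gens phi e ops \<longleftrightarrow> pmult (phi e) (1, ops) \<in> up_to_phase (stab_group n gens)"

definition error_syndromes ::
    "nat \<Rightarrow> pauli list \<Rightarrow> nat set \<Rightarrow> (bool list \<times> pauli1 list) list" where
  "error_syndromes n gens M = map (\<lambda>ops. (syndrome gens (1, ops), ops)) (pauli_ops_on n M)"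

text \<open>
  The \<open>if\<close> (rather than an implication) matters for evaluation: the simplifier leaves
  its branches alone until the condition is decided, so \<open>C\<close> is only ever evaluated at
  concrete syndromes.
\<close>
definition good_fraction ::
    "(bool list \<times> pauli1 list) list \<Rightarrow> (bool list \<Rightarrow> pauli1 list \<Rightarrow> bool) \<Rightarrow> real" where
  "good_fraction P C =
     real (length (filter (\<lambda>e. \<forall>(s, ops)\<in>set P. if s = e then C e ops else True)
                     (remdups (map fst P))))
       / real (length (remdups (map fst P)))"

lemma good_iff_error_syndromes:
  "good n gens phi M e \<longleftrightarrow>
     (\<forall>(s, ops)\<in>set (error_syndromes n gens M). if s = e then corrects n gens phi e ops else True)"
  unfolding good_def corrects_def error_syndromes_def Pset_eq_pauli_ops_on by auto

lemma success_rate_eq_good_fraction: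
  "success_rate n gens phi M = good_fraction (error_syndromes n gens M) (corrects n gens phi)"
proof -
  have "Sigma_set n gens M = set (map fst (error_syndromes n gens M))"
    unfolding Sigma_set_def error_syndromes_def Pset_eq_pauli_ops_on by (simp add: image_image)
  then show ?thesis
    unfolding success_rate_def good_fraction_def good_iff_error_syndromes
    by (simp only: card_set set_filter[symmetric] remdups_filter remdups_remdups)
qed

definition uncorrected_syndromes ::
    "nat \<Rightarrow> pauli list \<Rightarrow> (bool list \<Rightarrow> pauli) \<Rightarrow> nat set \<Rightarrow> bool list list" where
  "uncorrected_syndromes n gens phi M =
     map fst (filter (\<lambda>(s, ops). \<not> corrects n gens phi s ops) (error_syndromes n gens M))"

lemma not_good_if_uncorrected:
  "e \<in> set (uncorrected_syndromes n gens phi M) \<Longrightarrow> \<not> good n gens phi M e"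
  unfolding uncorrected_syndromes_def good_iff_error_syndromes by auto

definition stab5 :: "pauli list" where
  "stab5 =
    [(1, [PI, PI, PI, PI, PI]),
     (1, [PX, PZ, PZ, PX, PI]),
     (1, [PI, PX, PZ, PZ, PX]),
     (1, [PX, PI, PX, PZ, PZ]),
     (1, [PZ, PX, PI, PX, PZ]),
     (-1, [PX, PY, PI, PY, PX]),
     (-1, [PI, PZ, PY, PY, PZ]),
     (-1, [PY, PY, PZ, PI, PZ]),
     (-1, [PX, PX, PY, PI, PY]),
     (-1, [PZ, PI, PZ, PY, PY]),
     (-1, [PY, PX, PX, PY, PI]),
     (-1, [PI, PY, PX, PX, PY]),
     (-1, [PY, PZ, PI, PZ, PY]),
     (-1, [PZ, PY, PY, PZ, PI]),
     (-1, [PY, PI, PY, PX, PX]),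
     (1, [PZ, PZ, PX, PI, PX])]"

lemma stab_group_gens5: "stab_group 5 gens5 = set stab5"
proof
  show "stab_group 5 gens5 \<subseteq> set stab5"
    by (rule stab_group_subset_if_closed) (simp_all add: stab5_def gens5_def pid_def pmult_def eval_nat_numeral)
  have "set stab5 \<subseteq> set (map (\<lambda>hs. foldr pmult hs (pid 5)) (subseqs gens5))"
    by (simp add: stab5_def gens5_def pid_def pmult_def eval_nat_numeral)
  then show "set stab5 \<subseteq> stab_group 5 gens5"
    using subseq_products_in_stab_group by (rule order_trans)
qed

definition decoding_table5 :: "(bool list \<times> pauli) list" where
  "decoding_table5 =
    [([False, False, False, False], (1, [PI, PI, PI, PI, PI])),
     ([False, False, False, True],  (1, [PX, PI, PI, PI, PI])),
     ([True, False, True, True],    (1, [PY, PI, PI, PI, PI])),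
     ([True, False, True, False],   (1, [PZ, PI, PI, PI, PI])),
     ([True, False, False, False],  (1, [PI, PX, PI, PI, PI])),
     ([True, True, False, True],    (1, [PI, PY, PI, PI, PI])),
     ([False, True, False, True],   (1, [PI, PZ, PI, PI, PI])),
     ([True, True, False, False],   (1, [PI, PI, PX, PI, PI])),
     ([True, True, True, False],    (1, [PI, PI, PY, PI, PI])),
     ([False, False, True, False],  (1, [PI, PI, PZ, PI, PI])),
     ([False, True, True, False],   (1, [PI, PI, PI, PX, PI])),
     ([True, True, True, True],     (1, [PI, PI, PI, PY, PI])),
     ([True, False, False, True],   (1, [PI, PI, PI, PZ, PI])),
     ([False, False, True, True],   (1, [PI, PI, PI, PI, PX])),
     ([False, True, True, True],    (1, [PI, PI, PI, PI, PY])),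
     ([False, True, False, False],  (1, [PI, PI, PI, PI, PZ]))]"

lemma decoding_table5_syndromes: "\<forall>(e, x)\<in>set decoding_table5. syndrome gens5 x = e"
  by (simp add: decoding_table5_def gens5_def syndrome_def pmult_def)

lemma distinct_decoding_table5: "distinct (map fst decoding_table5)"
  by (simp add: decoding_table5_def)

lemma decoding_table5_keys: "length e = 4 \<Longrightarrow> e \<in> fst ` set decoding_table5"
proof -
  have "set (List.n_lists 4 [False, True]) \<subseteq> fst ` set decoding_table5"
    by (simp add: decoding_table5_def eval_nat_numeral)
  moreover assume "length e = 4"
  ultimately show ?thesis
    by (auto simp: set_n_lists)
qed

lemma E5_eq_decoding_table5: "E5 = snd ` set decoding_table5"
proof -
  have singles: "{(1, (replicate 5 PI)[i := p]) | i p. i < 5 \<and> p \<in> {PX, PY, PZ}}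
      = (\<lambda>(i, p). (1, (replicate 5 PI)[i := p])) ` ({..<5} \<times> {PX, PY, PZ})"
    by auto
  show ?thesis
    unfolding E5_def singles
    by (simp add: decoding_table5_def pid_def eval_nat_numeral lessThan_Suc insert_commute)
qed

lemma mem_decoding_table5_iff: "(e, x) \<in> set decoding_table5 \<longleftrightarrow> x \<in> E5 \<and> syndrome gens5 x = e"
proof
  assume "(e, x) \<in> set decoding_table5"
  then show "x \<in> E5 \<and> syndrome gens5 x = e"
    using decoding_table5_syndromes unfolding E5_eq_decoding_table5 by force
next
  assume "x \<in> E5 \<and> syndrome gens5 x = e"
  then show "(e, x) \<in> set decoding_table5"
    using decoding_table5_syndromes unfolding E5_eq_decoding_table5 by force
qed

lemma ex1_E5_syndrome: "length e = 4 \<Longrightarrow> \<exists>!x. x \<in> E5 \<and> syndrome gens5 x = e"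
  using decoding_table5_keys distinct_decoding_table5 eq_key_imp_eq_value
  unfolding mem_decoding_table5_iff[symmetric] by fastforce

lemma phi5_in_decoding_table5: "length e = 4 \<Longrightarrow> (e, phi5 e) \<in> set decoding_table5"
  unfolding mem_decoding_table5_iff phi5_def by (rule theI'[OF ex1_E5_syndrome])

lemma phi5_eq_map_of: "length e = 4 \<Longrightarrow> phi5 e = the (map_of decoding_table5 e)"
  using map_of_is_SomeI[OF distinct_decoding_table5 phi5_in_decoding_table5] by simp

lemma fst_phi5:
  assumes "length e = 4"
  shows "fst (phi5 e) = 1"
proof -
  have "\<forall>(e, x)\<in>set decoding_table5. fst x = 1"
    by (simp add: decoding_table5_def)
  then show ?thesis
    using phi5_in_decoding_table5[OF assms] by fastforce
qed

lemma corrects5_iff: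
  assumes "length e = 4"
  shows "corrects 5 gens5 phi5 e ops \<longleftrightarrow>
    snd (pmult (the (map_of decoding_table5 e)) (1, ops)) \<in> set (map snd stab5)"
proof -
  have "fst s \<in> phases" if "s \<in> stab_group 5 gens5" for s
    by (rule stab_group_phases[OF _ that]) (simp add: gens5_def phases_def)
  moreover have "fst (pmult (phi5 e) (1, ops)) \<in> phases"
    using assms by (intro fst_pmult_in_phases) (simp_all add: fst_phi5 phases_def)
  ultimately show ?thesis
    unfolding corrects_def phi5_eq_map_of[OF assms, symmetric]
    by (simp add: mem_up_to_phase_iff stab_group_gens5)
qed

text \<open>
  \<open>gens5\<close> is unfolded only inside \<open>syndrome\<close>, so that the term
  \<open>corrects 5 gens5 phi5 e ops\<close> survives until \<open>corrects5_iff\<close> rewrites it,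
  which its hypothesis postpones until \<open>e\<close> is a concrete syndrome.
\<close>
lemma syndrome_gens5: "syndrome gens5 g = map (\<lambda>h. pmult g h \<noteq> pmult h g)
  [(1, [PX, PZ, PZ, PX, PI]), (1, [PI, PX, PZ, PZ, PX]), (1, [PX, PI, PX, PZ, PZ]), (1, [PZ, PX, PI, PX, PZ])]"
  unfolding syndrome_def gens5_def ..

lemmas eval5_simps = good_fraction_def error_syndromes_def pauli_ops_on_def syndrome_gens5 pmult_def
  corrects5_iff decoding_table5_def map_of_Cons_code stab5_def upt_conv_Cons

lemma success_rate5_card_le1:
  assumes "M \<subseteq> {..<5}" and "card M \<le> 1"
  shows "success_rate 5 gens5 phi5 M = 1"
proof -
  have "M \<in> set ` set (filter (\<lambda>xs. length xs \<le> 1) (subseqs [0..<5]))"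
    using assms(1,2) by (rule subset_lessThan_in_subseqs[where P = "\<lambda>k. k \<le> 1"])
  then show ?thesis
    unfolding success_rate_eq_good_fraction
    by (simp add: upt_conv_Cons) (elim disjE; simp add: eval5_simps del: map_of.simps)
qed

lemma success_rate5_card2:
  assumes "M \<subseteq> {..<5}" and "card M = 2"
  shows "success_rate 5 gens5 phi5 M = 7 / 16"
proof -
  have "M \<in> set ` set (filter (\<lambda>xs. length xs = 2) (subseqs [0..<5]))"
    using assms(1,2) by (rule subset_lessThan_in_subseqs[where P = "\<lambda>k. k = 2"])
  then show ?thesis
    unfolding success_rate_eq_good_fraction
    by (simp add: upt_conv_Cons) (elim disjE; simp add: eval5_simps del: map_of.simps)
qed

lemma not_good5_if_card3:
  assumes "M \<subseteq> {..<5}" and "card M = 3" and "length e = 4"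
  shows "\<not> good 5 gens5 phi5 M e"
proof -
  have "M \<in> set ` set (filter (\<lambda>xs. length xs = 3) (subseqs [0..<5]))"
    using assms(1,2) by (rule subset_lessThan_in_subseqs[where P = "\<lambda>k. k = 3"])
  then have "fst ` set decoding_table5 \<subseteq> set (uncorrected_syndromes 5 gens5 phi5 M)"
    by (simp add: upt_conv_Cons)
      (elim disjE; simp add: uncorrected_syndromes_def eval5_simps del: map_of.simps)
  then have "e \<in> set (uncorrected_syndromes 5 gens5 phi5 M)"
    using decoding_table5_keys[OF assms(3)] by (rule subsetD)
  then show ?thesis
    by (rule not_good_if_uncorrected)
qed

theorem mainTheorem2:
  shows "(\<forall>e::bool list. length e = 4 \<longrightarrow> (\<exists>!x. x \<in> E5 \<and> syndrome gens5 x = e))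
    \<and> fS 5 gens5 phi5 0 = 1 \<and> fS 5 gens5 phi5 1 = 1 \<and> fS 5 gens5 phi5 2 = 7 / 16
    \<and> fS 5 gens5 phi5 3 = 0 \<and> fS 5 gens5 phi5 4 = 0 \<and> fS 5 gens5 phi5 5 = 0"
proof -
  have "fS 5 gens5 phi5 t = 1" if "t \<le> 1" for t
    using that by (intro fS_eq_const) (simp_all add: success_rate5_card_le1)
  moreover have "fS 5 gens5 phi5 2 = 7 / 16"
    by (intro fS_eq_const) (simp_all add: success_rate5_card2)
  moreover have "fS 5 gens5 phi5 t = 0" if "3 \<le> t" for t
  proof (rule fS_eq_0_if_no_good[OF that])
    fix T :: "nat set" and e :: "bool list"
    assume "T \<subseteq> {..<5}" "card T = 3" "length e = length gens5"
    then show "\<not> good 5 gens5 phi5 T e"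
      by (intro not_good5_if_card3) (simp_all add: gens5_def)
  qed
  ultimately show ?thesis
    using ex1_E5_syndrome by simp
qed

end
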